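(* Let $n\ge2$. Let $a,b>0$ and let $f:[-a,b]\to[0,\infty)$ be continuous, strictly positive on $(-a,b)$, such that $h:=f^{1/(n-1)}$ is concave on $[-a,b]$ and $\int_{-a}^b t f(t)\,dt=0$. Then $$\frac{\int_0^b f(t)\,dt}{\int_{-a}^0 f(t)\,dt}\le\Big(1+\frac1n\Big)^n-1,$$ with equality if and only if $h$ is affine on $[-a,b]$ and $h(-a)=0$. *)

theory Defs
  imports "HOL-Analysis.Analysis"
begin

end

theory Submission
  imports Defs
begin

text \<open>
  Write \<open>h = f powr (1 / (n - 1))\<close> and compare \<open>f\<close> with the section profile \<open>\<ell>(t)^(n-1)\<close> of a
  cone: \<open>\<ell>\<close> is affine with \<open>\<ell>(0) = h(0)\<close>, vanishes at the apex \<open>-\<alpha>\<close>, and \<open>\<alpha>\<close> is chosen so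
  that the cone has the same mass as \<open>f\<close> on the negative side; its positive side \<open>[0, \<beta>]\<close> is cut
  off so that the masses agree there too. Since \<open>h - \<ell>\<close> is concave and vanishes at 0, it changes
  sign only once on \<open>[-a, 0]\<close>; the equal masses make it nonnegative somewhere on \<open>[-a, 0)\<close>, so
  it is nonpositive on \<open>[0, b]\<close>. Hence passing from \<open>f\<close> to the cone
  moves mass towards the left on both sides, so the first moment of the cone is at most that of
  \<open>f\<close>, namely 0. For the cone this says \<open>(\<beta> + \<alpha>) / \<alpha> \<le> 1 + 1/n\<close>, and the mass ratio of the cone
  is \<open>((\<beta> + \<alpha>) / \<alpha>)^n - 1\<close>. Equality forces every displaced mass to vanish, i.e. \<open>f\<close> is itself
  the profile of a cone with apex \<open>-a\<close>.
\<close>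

lemma has_integral_shifted_power:
  fixes p q c :: real and m :: nat
  assumes "p \<le> q"
  shows "((\<lambda>t. (t + c) ^ m) has_integral ((q + c) ^ Suc m - (p + c) ^ Suc m) / Suc m) {p..q}"
proof -
  have "((\<lambda>x. (x + c) ^ Suc m / Suc m) has_real_derivative (x + c) ^ m) (at x within {p..q})" for x
    by (rule derivative_eq_intros refl | simp)+
  then show ?thesis
    using fundamental_theorem_of_calculus[OF assms, of "\<lambda>x. (x + c) ^ Suc m / Suc m"]
    by (simp add: has_real_derivative_iff_has_vector_derivative diff_divide_distrib)
qed

lemma has_integral_moment_shifted_power:
  fixes p q c :: real and m :: nat
  defines "P \<equiv> \<lambda>x. (x + c) ^ Suc (Suc m) / Suc (Suc m) - c * (x + c) ^ Suc m / Suc m"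
  assumes "p \<le> q"
  shows "((\<lambda>t. t * (t + c) ^ m) has_integral P q - P p) {p..q}"
proof -
  have "(P has_real_derivative t * (t + c) ^ m) (at t within {p..q})" for t
  proof -
    have "(P has_real_derivative (t + c) ^ Suc m - c * (t + c) ^ m) (at t within {p..q})"
      unfolding P_def by (rule derivative_eq_intros refl | simp)+
    then show ?thesis by (simp add: algebra_simps)
  qed
  then show ?thesis
    using fundamental_theorem_of_calculus[OF assms(2), of P]
    by (simp add: has_real_derivative_iff_has_vector_derivative)
qed

lemma concave_on_chord_le:
  fixes \<phi> :: "real \<Rightarrow> real"
  assumes "concave_on S \<phi>" "x \<in> S" "y \<in> S" "x \<le> t" "t \<le> y"
  shows "(y - t) * \<phi> x + (t - x) * \<phi> y \<le> (y - x) * \<phi> t"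
proof (cases "x = y")
  case False
  define u where "u = (t - x) / (y - x)"
  have u: "0 \<le> u" "u \<le> 1" "u * (y - x) = t - x"
    using assms False by (auto simp: u_def field_simps)
  have "(1 - u) *\<^sub>R x + u *\<^sub>R y = t"
    using u(3) by (simp add: algebra_simps)
  then have "(1 - u) * \<phi> x + u * \<phi> y \<le> \<phi> t"
    using concave_onD[OF assms(1) u(1,2) assms(2,3)] by simp
  then have "(y - x) * ((1 - u) * \<phi> x + u * \<phi> y) \<le> (y - x) * \<phi> t"
    using assms by (intro mult_left_mono) auto
  moreover have "(y - x) * ((1 - u) * \<phi> x + u * \<phi> y)
      = (y - x) * \<phi> x - (u * (y - x)) * \<phi> x + (u * (y - x)) * \<phi> y"
    by (simp add: algebra_simps)
  ultimately show ?thesis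
    unfolding u(3) by (simp add: algebra_simps)
qed (use assms in auto)

lemma concave_on_nonneg_between:
  fixes \<phi> :: "real \<Rightarrow> real"
  assumes "concave_on S \<phi>" "x \<in> S" "y \<in> S" "x \<le> t" "t \<le> y" "0 \<le> \<phi> x" "0 \<le> \<phi> y"
  shows "0 \<le> \<phi> t"
proof (cases "x = y")
  case False
  have "0 \<le> (y - t) * \<phi> x + (t - x) * \<phi> y"
    using assms by simp
  then have "0 \<le> (y - x) * \<phi> t"
    using concave_on_chord_le[OF assms(1-5)] by linarith
  then show ?thesis
    using assms False by (simp add: zero_le_mult_iff)
qed (use assms in auto)

lemma concave_on_nonpos_beyond:
  fixes \<phi> :: "real \<Rightarrow> real"
  assumes "concave_on S \<phi>" "x \<in> S" "y \<in> S" "x < z" "z \<le> y" "0 \<le> \<phi> x" "\<phi> z \<le> 0"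
  shows "\<phi> y \<le> 0"
proof -
  have "(y - z) * \<phi> x + (z - x) * \<phi> y \<le> (y - x) * \<phi> z"
    using concave_on_chord_le[OF assms(1-3)] assms(4,5) by simp
  moreover have "(y - x) * \<phi> z \<le> 0" "0 \<le> (y - z) * \<phi> x"
    using assms by (simp_all add: mult_nonneg_nonpos)
  ultimately have "(z - x) * \<phi> y \<le> 0" by linarith
  then show ?thesis
    using assms(4) by (simp add: mult_le_0_iff)
qed

lemma concave_on_sign_change:
  fixes \<phi> :: "real \<Rightarrow> real" and p q :: real
  defines "c \<equiv> Inf {t \<in> {p..q}. 0 \<le> \<phi> t}"
  assumes "concave_on S \<phi>" "{p..q} \<subseteq> S" "p \<le> q" "0 \<le> \<phi> q"
  shows "p \<le> c" "c \<le> q"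
    and "\<And>t. c < t \<Longrightarrow> t \<le> q \<Longrightarrow> 0 \<le> \<phi> t"
    and "\<And>t. p \<le> t \<Longrightarrow> t < c \<Longrightarrow> \<phi> t < 0"
proof -
  let ?Z = "{t \<in> {p..q}. 0 \<le> \<phi> t}"
  have q: "q \<in> ?Z" and bdd: "bdd_below ?Z"
    using assms by (auto intro: bdd_belowI[of _ p])
  show "c \<le> q"
    unfolding c_def using q bdd by (rule cInf_lower)
  show "p \<le> c"
    unfolding c_def using q by (intro cInf_greatest) auto
  show "0 \<le> \<phi> t" if "c < t" "t \<le> q" for t
  proof -
    obtain s where s: "s \<in> ?Z" "s < t"
      using \<open>c < t\<close> q bdd cInf_less_iff[of ?Z t] unfolding c_def by blast
    moreover have "s \<in> S" "q \<in> S"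
      using s q assms(3) by auto
    ultimately show ?thesis
      using concave_on_nonneg_between[OF assms(2), of s q t] assms(5) that by auto
  qed
  show "\<phi> t < 0" if "p \<le> t" "t < c" for t
  proof (rule ccontr)
    assume "\<not> \<phi> t < 0"
    then have "c \<le> t"
      unfolding c_def using that \<open>c \<le> q\<close> bdd by (intro cInf_lower) (auto simp: c_def)
    with that show False by simp
  qed
qed

lemma has_integral_weighted_difference:
  fixes u v :: "real \<Rightarrow> real"
  assumes "(u has_integral I) S" "(v has_integral J) S"
    and "((\<lambda>t. t * u t) has_integral Mu) S" "((\<lambda>t. t * v t) has_integral Mv) S"
  shows "((\<lambda>t. (c - t) * (u t - v t)) has_integral c * (I - J) - (Mu - Mv)) S"
proof -
  have "((\<lambda>t. c * (u t - v t) - (t * u t - t * v t)) has_integral c * (I - J) - (Mu - Mv)) S"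
    using assms by (intro has_integral_diff has_integral_mult_right) auto
  then show ?thesis
    by (simp add: algebra_simps)
qed

lemma continuous_on_eq_off_point:
  fixes u v :: "real \<Rightarrow> real"
  assumes "p < q" "continuous_on {p..q} u" "continuous_on {p..q} v"
    and "\<And>t. t \<in> {p..q} \<Longrightarrow> t \<noteq> c \<Longrightarrow> u t = v t" "t \<in> {p..q}"
  shows "u t = v t"
proof -
  have "((\<lambda>t. (u t - v t)\<^sup>2) has_integral 0) {p..q}"
    by (rule has_integral_spike_finite[of "{c}" _ _ "\<lambda>_. 0"]) (use assms(4) in auto)
  moreover have "continuous_on {p..q} (\<lambda>t. (u t - v t)\<^sup>2)"
    using assms(2,3) by (intro continuous_intros)
  ultimately have "(u t - v t)\<^sup>2 = 0"
    using has_integral_0_cbox_imp_0[of p q "\<lambda>t. (u t - v t)\<^sup>2" t] assms(1,5) by auto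
  then show ?thesis by simp
qed

locale grunbaum_profile =
  fixes n :: nat and a b :: real and f :: "real \<Rightarrow> real"
  assumes n: "n \<ge> 2"
    and a: "a > 0" and b: "b > 0"
    and cont: "continuous_on {-a..b} f"
    and nonneg: "\<And>t. t \<in> {-a..b} \<Longrightarrow> f t \<ge> 0"
    and pos: "\<And>t. t \<in> {-a<..<b} \<Longrightarrow> f t > 0"
    and conc: "concave_on {-a..b} (\<lambda>t. f t powr (1 / (real n - 1)))"
    and bary: "integral {-a..b} (\<lambda>t. t * f t) = 0"
begin

definition h :: "real \<Rightarrow> real" where
  "h t = f t powr (1 / (real n - 1))"

definition V :: real where "V = integral {-a..0} f"
definition W :: real where "W = integral {0..b} f"

text \<open>
  The comparison cone: \<open>h_cone\<close> is affine with \<open>h_cone 0 = h 0\<close> and root \<open>-\<alpha>\<close>, where \<open>\<alpha>\<close> is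
  chosen so that \<open>f_cone\<close> has mass \<open>V\<close> on \<open>[-\<alpha>, 0]\<close>, and \<open>\<beta>\<close> so that it has mass \<open>W\<close> on \<open>[0, \<beta>]\<close>.
\<close>

definition \<alpha> :: real where "\<alpha> = real n * V / h 0 ^ (n - 1)"
definition \<kappa> :: real where "\<kappa> = h 0 / \<alpha>"
definition h_cone :: "real \<Rightarrow> real" where "h_cone t = \<kappa> * (t + \<alpha>)"
definition f_cone :: "real \<Rightarrow> real" where "f_cone t = h_cone t ^ (n - 1)"
definition \<beta> :: real where "\<beta> = root n (\<alpha> ^ n + real n * W / \<kappa> ^ (n - 1)) - \<alpha>"

lemma Suc_pred_n [simp]: "Suc (n - 1) = n"
  using n by simp

lemma power_n_eq: "(x :: real) ^ n = x ^ (n - 1) * x"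
  by (metis Suc_pred_n power_Suc2)

lemma n_pos: "0 < n"
  using n by simp

lemma h_nonneg: "0 \<le> h t"
  by (simp add: h_def)

lemma h_concave: "concave_on {-a..b} h"
  using conc by (simp add: h_def[abs_def])

lemma f_eq_h_power:
  assumes "t \<in> {-a..b}"
  shows "f t = h t ^ (n - 1)"
proof (cases "f t = 0")
  case True
  then show ?thesis using n by (simp add: h_def)
next
  case False
  then have "0 < f t" using nonneg[OF assms] by simp
  moreover have "real (n - 1) = real n - 1" using n by simp
  ultimately show ?thesis
    using n by (simp add: h_def powr_powr flip: powr_realpow)
qed

lemma h_eq_if_f_eq_power:
  assumes "t \<in> {-a..b}" "0 \<le> y" "f t = y ^ (n - 1)"
  shows "h t = y"
  using power_eq_imp_eq_base[of "h t" "n - 1" y] f_eq_h_power[OF assms(1)] assms(2,3) h_nonneg n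
  by simp

lemma continuous_on_f:
  assumes "-a \<le> x" "y \<le> b"
  shows "continuous_on {x..y} f"
  using continuous_on_subset[OF cont] assms by auto

lemma f_integrable:
  assumes "-a \<le> x" "y \<le> b"
  shows "f integrable_on {x..y}"
  using integrable_continuous_interval[OF continuous_on_f[OF assms]] .

lemma f_has_integral:
  assumes "-a \<le> x" "y \<le> b"
  shows "(f has_integral integral {x..y} f) {x..y}"
  using integrable_integral[OF f_integrable[OF assms]] .

lemma f_moment_integrable:
  assumes "-a \<le> x" "y \<le> b"
  shows "(\<lambda>t. t * f t) integrable_on {x..y}"
  using continuous_on_f[OF assms] by (intro integrable_continuous_interval continuous_intros)

lemma integral_f_pos:
  assumes "-a \<le> x" "x < y" "y \<le> b"
  shows "0 < integral {x..y} f"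
proof -
  have "0 \<le> integral {x..y} f"
    using assms nonneg by (intro integral_nonneg f_integrable) auto
  moreover have "integral {x..y} f \<noteq> 0"
  proof
    assume "integral {x..y} f = 0"
    then have "f ((x + y) / 2) = 0"
      using integral_eq_0_iff[OF continuous_on_f] assms nonneg by auto
    moreover have "0 < f ((x + y) / 2)"
      using assms by (intro pos) auto
    ultimately show False by simp
  qed
  ultimately show ?thesis by simp
qed

lemma V_pos: "0 < V"
  unfolding V_def using a b by (intro integral_f_pos) auto

lemma W_pos: "0 < W"
  unfolding W_def using a b by (intro integral_f_pos) auto

lemma h0_pos: "0 < h 0"
  using pos[of 0] a b by (simp add: h_def)

lemma \<alpha>_pos: "0 < \<alpha>"
  using V_pos h0_pos n_pos by (simp add: \<alpha>_def)

lemma \<kappa>_pos: "0 < \<kappa>"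
  using h0_pos \<alpha>_pos by (simp add: \<kappa>_def)

lemma h_cone_0: "h_cone 0 = h 0"
  using \<alpha>_pos by (simp add: h_cone_def \<kappa>_def)

lemma h_cone_nonneg: "-\<alpha> \<le> t \<Longrightarrow> 0 \<le> h_cone t"
  using \<kappa>_pos by (simp add: h_cone_def)

lemma f_cone_nonneg: "-\<alpha> \<le> t \<Longrightarrow> 0 \<le> f_cone t"
  by (simp add: f_cone_def h_cone_nonneg)

lemma continuous_on_f_cone: "continuous_on S f_cone"
  unfolding f_cone_def h_cone_def by (intro continuous_intros)

lemma f_cone_has_integral:
  assumes "x \<le> y"
  shows "(f_cone has_integral \<kappa> ^ (n - 1) * (((y + \<alpha>) ^ n - (x + \<alpha>) ^ n) / n)) {x..y}"
proof -
  have "((\<lambda>t. (t + \<alpha>) ^ (n - 1)) has_integral ((y + \<alpha>) ^ n - (x + \<alpha>) ^ n) / n) {x..y}"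
    using has_integral_shifted_power[OF assms, of \<alpha> "n - 1"] by (simp only: Suc_pred_n)
  then show ?thesis
    unfolding f_cone_def h_cone_def power_mult_distrib by (rule has_integral_mult_right)
qed

lemma f_cone_integrable: "f_cone integrable_on {x..y}"
  using integrable_continuous_interval[OF continuous_on_f_cone] .

lemma f_cone_moment_integrable: "(\<lambda>t. t * f_cone t) integrable_on {x..y}"
  using continuous_on_f_cone[of "{x..y}"] by (intro integrable_continuous_interval continuous_intros)

lemma f_cone_has_integral_V: "(f_cone has_integral V) {-\<alpha>..0}"
proof -
  have "\<kappa> ^ (n - 1) * (\<alpha> ^ n / n) = (\<kappa> * \<alpha>) ^ (n - 1) * \<alpha> / n"
    by (simp add: power_n_eq[of \<alpha>] power_mult_distrib)
  also have "\<dots> = V"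
    using \<alpha>_pos h0_pos n_pos by (simp add: \<kappa>_def) (simp add: \<alpha>_def)
  finally have "\<kappa> ^ (n - 1) * (\<alpha> ^ n / n) = V" .
  then show ?thesis
    using f_cone_has_integral[of "-\<alpha>" 0] \<alpha>_pos n_pos by (simp add: power_0_left)
qed

lemma \<beta>_plus_\<alpha>_power: "(\<beta> + \<alpha>) ^ n = \<alpha> ^ n + real n * W / \<kappa> ^ (n - 1)"
  using \<alpha>_pos W_pos \<kappa>_pos n_pos by (simp add: \<beta>_def real_root_pow_pos2)

lemma \<beta>_pos: "0 < \<beta>"
proof -
  have "\<alpha> ^ n < (\<beta> + \<alpha>) ^ n"
    unfolding \<beta>_plus_\<alpha>_power using W_pos \<kappa>_pos n_pos by simp
  moreover have "0 \<le> \<beta> + \<alpha>"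
    using \<alpha>_pos W_pos \<kappa>_pos unfolding \<beta>_def by (simp add: real_root_ge_zero)
  ultimately show ?thesis
    using power_less_imp_less_base by fastforce
qed

lemma f_cone_has_integral_W: "(f_cone has_integral W) {0..\<beta>}"
  using f_cone_has_integral[of 0 \<beta>] \<beta>_pos \<kappa>_pos n_pos by (simp add: \<beta>_plus_\<alpha>_power)

lemma W_div_V: "W / V = ((\<beta> + \<alpha>) / \<alpha>) ^ n - 1"
proof -
  have "V = \<kappa> ^ (n - 1) * (\<alpha> ^ n / n)" "W = \<kappa> ^ (n - 1) * (((\<beta> + \<alpha>) ^ n - \<alpha> ^ n) / n)"
    using has_integral_unique[OF f_cone_has_integral_V f_cone_has_integral[of "-\<alpha>" 0]]
      has_integral_unique[OF f_cone_has_integral_W f_cone_has_integral[of 0 \<beta>]] \<alpha>_pos \<beta>_pos n_pos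
    by (simp_all add: power_0_left)
  then have "W / V = ((\<beta> + \<alpha>) ^ n - \<alpha> ^ n) / \<alpha> ^ n"
    using \<kappa>_pos n_pos by simp
  also have "\<dots> = ((\<beta> + \<alpha>) / \<alpha>) ^ n - 1"
    using \<alpha>_pos by (simp add: power_divide diff_divide_distrib)
  finally show ?thesis .
qed

lemma f_cone_moment_has_integral_total:
  "((\<lambda>t. t * f_cone t) has_integral
     \<kappa> ^ (n - 1) * (\<beta> + \<alpha>) ^ n * ((\<beta> + \<alpha>) / (n + 1) - \<alpha> / n)) {-\<alpha>..\<beta>}"
proof -
  have "((\<lambda>t. t * (t + \<alpha>) ^ (n - 1)) has_integral
      (\<beta> + \<alpha>) ^ Suc n / Suc n - \<alpha> * (\<beta> + \<alpha>) ^ n / n) {-\<alpha>..\<beta>}"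
    using has_integral_moment_shifted_power[of "-\<alpha>" \<beta> \<alpha> "n - 1"] \<alpha>_pos \<beta>_pos n_pos
    by (simp only: Suc_pred_n) (simp add: power_0_left)
  then have "((\<lambda>t. \<kappa> ^ (n - 1) * (t * (t + \<alpha>) ^ (n - 1))) has_integral
      \<kappa> ^ (n - 1) * ((\<beta> + \<alpha>) ^ Suc n / Suc n - \<alpha> * (\<beta> + \<alpha>) ^ n / n)) {-\<alpha>..\<beta>}"
    by (rule has_integral_mult_right)
  moreover have "\<kappa> ^ (n - 1) * ((\<beta> + \<alpha>) ^ Suc n / Suc n - \<alpha> * (\<beta> + \<alpha>) ^ n / n)
      = \<kappa> ^ (n - 1) * (\<beta> + \<alpha>) ^ n * ((\<beta> + \<alpha>) / (n + 1) - \<alpha> / n)"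
    using n_pos by (simp add: field_simps)
  moreover have "(\<lambda>t. \<kappa> ^ (n - 1) * (t * (t + \<alpha>) ^ (n - 1))) = (\<lambda>t. t * f_cone t)"
    by (simp add: fun_eq_iff f_cone_def h_cone_def power_mult_distrib)
  ultimately show ?thesis
    by metis
qed

lemma f_le_f_cone_iff:
  assumes "t \<in> {-a..b}" "-\<alpha> \<le> t"
  shows "f t \<le> f_cone t \<longleftrightarrow> h t \<le> h_cone t"
  using f_eq_h_power[OF assms(1)] h_nonneg h_cone_nonneg[OF assms(2)] n
  by (simp add: f_cone_def)

lemma f_cone_le_f_iff:
  assumes "t \<in> {-a..b}" "-\<alpha> \<le> t"
  shows "f_cone t \<le> f t \<longleftrightarrow> h_cone t \<le> h t"
  using f_eq_h_power[OF assms(1)] h_nonneg h_cone_nonneg[OF assms(2)] n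
  by (simp add: f_cone_def)

lemma h_minus_h_cone_concave: "concave_on {-a..b} (\<lambda>t. h t - h_cone t)"
proof -
  have "convex_on {-a..b} (\<lambda>t. \<kappa> * (t + \<alpha>))"
    using \<kappa>_pos by (intro convex_on_cmul convex_on_add) (auto simp: convex_on_ident convex_on_const)
  then show ?thesis
    using concave_on_diff[OF h_concave] by (simp add: h_cone_def[abs_def])
qed

lemma a_le_\<alpha>: "a \<le> \<alpha>"
proof (rule ccontr)
  assume "\<not> a \<le> \<alpha>"
  then have "-a < -\<alpha>" by simp
  have "0 \<le> h t - h_cone t" if "t \<in> {-\<alpha>..0}" for t
    using concave_on_nonneg_between[OF h_minus_h_cone_concave, of "-\<alpha>" 0 t] that \<open>-a < -\<alpha>\<close> b
      h_nonneg h_cone_0 by (simp add: h_cone_def)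
  then have "f_cone t \<le> f t" if "t \<in> {-\<alpha>..0}" for t
    using f_cone_le_f_iff[of t] that \<open>-a < -\<alpha>\<close> b by simp
  then have "V \<le> integral {-\<alpha>..0} f"
    using has_integral_le[OF f_cone_has_integral_V f_has_integral] \<open>-a < -\<alpha>\<close> b by simp
  moreover have "integral {-a..-\<alpha>} f + integral {-\<alpha>..0} f = V"
    unfolding V_def using \<open>-a < -\<alpha>\<close> \<alpha>_pos b
    by (intro has_integral_unique[OF has_integral_combine[of "-a" "-\<alpha>" 0] f_has_integral] f_has_integral)
      auto
  moreover have "0 < integral {-a..-\<alpha>} f"
    using \<open>-a < -\<alpha>\<close> \<alpha>_pos b by (intro integral_f_pos) auto
  ultimately show False by simp
qed

lemma ex_h_cone_le_h_left: "\<exists>x\<in>{-a..<0}. h_cone x \<le> h x"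
proof (rule ccontr)
  assume "\<not> ?thesis"
  then have "f t < f_cone t" if "t \<in> {-a<..<0}" for t
    using f_cone_le_f_iff[of t] that a_le_\<alpha> b by fastforce
  then have "integral {-a..0} f < integral {-a..0} f_cone"
    using a b by (intro integral_less_real continuous_on_f continuous_on_f_cone) auto
  also have "\<dots> \<le> integral {-\<alpha>..-a} f_cone + integral {-a..0} f_cone"
    using a_le_\<alpha> f_cone_nonneg by (intro add_increasing integral_nonneg f_cone_integrable) auto
  also have "\<dots> = V"
    using a_le_\<alpha> a
    by (intro has_integral_unique[OF has_integral_combine[of "-\<alpha>" "-a" 0] f_cone_has_integral_V]
        integrable_integral f_cone_integrable) auto
  finally show False
    by (simp add: V_def)
qed

lemma h_le_h_cone_right:
  assumes "t \<in> {0..b}"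
  shows "h t \<le> h_cone t"
proof -
  obtain x where "x \<in> {-a..<0}" "h_cone x \<le> h x"
    using ex_h_cone_le_h_left by blast
  then show ?thesis
    using concave_on_nonpos_beyond[OF h_minus_h_cone_concave, of x t 0] assms a h_cone_0 by auto
qed

lemma f_le_f_cone_right:
  assumes "t \<in> {0..b}"
  shows "f t \<le> f_cone t"
  using f_le_f_cone_iff[of t] h_le_h_cone_right[OF assms] assms a \<alpha>_pos by simp

lemma \<beta>_le_b: "\<beta> \<le> b"
proof (rule ccontr)
  assume "\<not> \<beta> \<le> b"
  have "W \<le> \<kappa> ^ (n - 1) * (((b + \<alpha>) ^ n - (0 + \<alpha>) ^ n) / n)"
    unfolding W_def using a b f_le_f_cone_right
    by (intro has_integral_le[OF f_has_integral f_cone_has_integral]) auto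
  also have "\<dots> < \<kappa> ^ (n - 1) * (((\<beta> + \<alpha>) ^ n - (0 + \<alpha>) ^ n) / n)"
    using \<open>\<not> \<beta> \<le> b\<close> b \<alpha>_pos \<kappa>_pos n_pos by (simp add: power_strict_mono divide_strict_right_mono)
  also have "\<dots> = W"
    using has_integral_unique[OF f_cone_has_integral f_cone_has_integral_W] \<beta>_pos by simp
  finally show False by simp
qed

definition crossing :: real where
  "crossing = Inf {t \<in> {-a..0}. 0 \<le> h t - h_cone t}"

lemma crossing_bounds: "-a \<le> crossing" "crossing \<le> 0"
  and h_cone_le_h_above_crossing: "crossing < t \<Longrightarrow> t \<le> 0 \<Longrightarrow> h_cone t \<le> h t"
  and h_less_h_cone_below_crossing: "-a \<le> t \<Longrightarrow> t < crossing \<Longrightarrow> h t < h_cone t"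
  using concave_on_sign_change[OF h_minus_h_cone_concave, of "-a" 0] a b h_cone_0
  unfolding crossing_def by auto

text \<open>
  As \<open>f\<close> and \<open>f_cone\<close> carry the same mass on each side of 0, the first moments differ by the
  integral of \<open>(c - t)\<close> times the difference of the densities for any \<open>c\<close>; choosing \<open>c\<close> at the
  sign change makes the integrands nonnegative.
\<close>

lemma moment_gap_left:
  "integral {-a..0} (\<lambda>t. t * f t) - integral {-\<alpha>..0} (\<lambda>t. t * f_cone t) =
     integral {-\<alpha>..-a} (\<lambda>t. (crossing - t) * f_cone t) +
     integral {-a..0} (\<lambda>t. (crossing - t) * (f_cone t - f t))"
proof -
  let ?c = crossing and ?G = "\<lambda>x y. integral {x..y} f_cone"
    and ?M = "\<lambda>x y. integral {x..y} (\<lambda>t. t * f_cone t)" and ?F = "integral {-a..0} (\<lambda>t. t * f t)"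
  have "((\<lambda>t. (?c - t) * (f_cone t - 0)) has_integral ?c * (?G (-\<alpha>) (-a) - 0) - (?M (-\<alpha>) (-a) - 0))
      {-\<alpha>..-a}"
    by (intro has_integral_weighted_difference integrable_integral f_cone_integrable
        f_cone_moment_integrable) auto
  then have "integral {-\<alpha>..-a} (\<lambda>t. (?c - t) * f_cone t) = ?c * ?G (-\<alpha>) (-a) - ?M (-\<alpha>) (-a)"
    by (simp add: integral_unique)
  moreover have "((\<lambda>t. (?c - t) * (f_cone t - f t)) has_integral ?c * (?G (-a) 0 - V) - (?M (-a) 0 - ?F))
      {-a..0}"
    unfolding V_def using a b
    by (intro has_integral_weighted_difference integrable_integral f_cone_integrable
        f_cone_moment_integrable f_integrable f_moment_integrable) auto
  moreover have "V = ?G (-\<alpha>) (-a) + ?G (-a) 0"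
    using Henstock_Kurzweil_Integration.integral_combine[OF _ _ f_cone_integrable, of "-\<alpha>" "-a" 0]
      a_le_\<alpha> a integral_unique[OF f_cone_has_integral_V] by simp
  moreover have "?M (-\<alpha>) 0 = ?M (-\<alpha>) (-a) + ?M (-a) 0"
    using Henstock_Kurzweil_Integration.integral_combine[OF _ _ f_cone_moment_integrable, of "-\<alpha>" "-a" 0]
      a_le_\<alpha> a by simp
  ultimately show ?thesis
    by (simp add: integral_unique algebra_simps)
qed

lemma moment_gap_right:
  "integral {0..b} (\<lambda>t. t * f t) - integral {0..\<beta>} (\<lambda>t. t * f_cone t) =
     integral {0..\<beta>} (\<lambda>t. (\<beta> - t) * (f_cone t - f t)) + integral {\<beta>..b} (\<lambda>t. (t - \<beta>) * f t)"
proof -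
  let ?F = "\<lambda>x y. integral {x..y} f" and ?T = "\<lambda>x y. integral {x..y} (\<lambda>t. t * f t)"
    and ?M = "integral {0..\<beta>} (\<lambda>t. t * f_cone t)"
  have "((\<lambda>t. (\<beta> - t) * (f_cone t - f t)) has_integral \<beta> * (W - ?F 0 \<beta>) - (?M - ?T 0 \<beta>)) {0..\<beta>}"
    using a \<beta>_le_b
    by (intro has_integral_weighted_difference f_cone_has_integral_W integrable_integral
        f_cone_moment_integrable f_integrable f_moment_integrable) auto
  moreover have "((\<lambda>t. t * f t - \<beta> * f t) has_integral ?T \<beta> b - \<beta> * ?F \<beta> b) {\<beta>..b}"
    using a \<beta>_pos
    by (intro has_integral_diff has_integral_mult_right integrable_integral f_integrable
        f_moment_integrable) auto
  then have "integral {\<beta>..b} (\<lambda>t. (t - \<beta>) * f t) = ?T \<beta> b - \<beta> * ?F \<beta> b"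
    by (simp add: integral_unique left_diff_distrib)
  moreover have "W = ?F 0 \<beta> + ?F \<beta> b"
    unfolding W_def using Henstock_Kurzweil_Integration.integral_combine[OF _ _ f_integrable] a \<beta>_pos \<beta>_le_b
    by simp
  moreover have "?T 0 b = ?T 0 \<beta> + ?T \<beta> b"
    using Henstock_Kurzweil_Integration.integral_combine[OF _ _ f_moment_integrable] a \<beta>_pos \<beta>_le_b
    by simp
  ultimately show ?thesis
    by (simp add: integral_unique algebra_simps)
qed

lemma f_cone_pos: "-\<alpha> < t \<Longrightarrow> 0 < f_cone t"
  using \<kappa>_pos by (simp add: f_cone_def h_cone_def)

lemma left_gap_nonneg:
  shows "t \<in> {-\<alpha>..-a} \<Longrightarrow> 0 \<le> (crossing - t) * f_cone t"
    and "t \<in> {-a..0} \<Longrightarrow> 0 \<le> (crossing - t) * (f_cone t - f t)"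
proof -
  show "0 \<le> (crossing - t) * f_cone t" if "t \<in> {-\<alpha>..-a}"
    using that crossing_bounds f_cone_nonneg[of t] by simp
  show "0 \<le> (crossing - t) * (f_cone t - f t)" if t: "t \<in> {-a..0}"
  proof -
    have "-\<alpha> \<le> t" "t \<in> {-a..b}"
      using t a_le_\<alpha> b by auto
    then consider "crossing < t" "f_cone t \<le> f t" | "t < crossing" "f t \<le> f_cone t" | "t = crossing"
      using h_cone_le_h_above_crossing h_less_h_cone_below_crossing f_le_f_cone_iff f_cone_le_f_iff t
      by (metis atLeastAtMost_iff less_imp_le linorder_neqE_linordered_idom)
    then show ?thesis
      by cases (simp_all add: mult_nonpos_nonpos)
  qed
qed

lemma right_gap_nonneg:
  shows "t \<in> {0..\<beta>} \<Longrightarrow> 0 \<le> (\<beta> - t) * (f_cone t - f t)"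
    and "t \<in> {\<beta>..b} \<Longrightarrow> 0 \<le> (t - \<beta>) * f t"
  using f_le_f_cone_right[of t] nonneg[of t] \<beta>_le_b \<beta>_pos a by simp_all

lemma left_gap_integrals_nonneg:
  "0 \<le> integral {-\<alpha>..-a} (\<lambda>t. (crossing - t) * f_cone t)"
  "0 \<le> integral {-a..0} (\<lambda>t. (crossing - t) * (f_cone t - f t))"
  using b by (intro integral_nonneg left_gap_nonneg integrable_continuous_interval continuous_intros
      continuous_on_f_cone continuous_on_f; auto)+

lemma cone_moment_left_le: "integral {-\<alpha>..0} (\<lambda>t. t * f_cone t) \<le> integral {-a..0} (\<lambda>t. t * f t)"
  using moment_gap_left left_gap_integrals_nonneg by linarith

lemma cone_moment_left_eq:
  assumes "integral {-\<alpha>..0} (\<lambda>t. t * f_cone t) = integral {-a..0} (\<lambda>t. t * f t)"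
  shows "\<alpha> = a" "\<And>t. t \<in> {-a..0} \<Longrightarrow> f t = f_cone t"
proof -
  have cont_outer: "continuous_on {-\<alpha>..-a} (\<lambda>t. (crossing - t) * f_cone t)"
    by (intro continuous_intros continuous_on_f_cone)
  have cont_inner: "continuous_on {-a..0} (\<lambda>t. (crossing - t) * (f_cone t - f t))"
    using b by (intro continuous_intros continuous_on_f_cone continuous_on_f) auto
  have outer: "integral {-\<alpha>..-a} (\<lambda>t. (crossing - t) * f_cone t) = 0"
    and inner: "integral {-a..0} (\<lambda>t. (crossing - t) * (f_cone t - f t)) = 0"
    using moment_gap_left left_gap_integrals_nonneg assms by linarith+
  show "\<alpha> = a"
  proof (rule ccontr)
    assume "\<alpha> \<noteq> a"
    then have "-\<alpha> < -a" using a_le_\<alpha> by simp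
    define t where "t = -(\<alpha> + a) / 2"
    have "t \<in> {-\<alpha>..-a}"
      using \<open>-\<alpha> < -a\<close> by (simp add: t_def)
    then have "(crossing - t) * f_cone t = 0"
      using integral_eq_0_iff[OF cont_outer \<open>-\<alpha> < -a\<close> left_gap_nonneg(1)] outer by blast
    moreover have "0 < (crossing - t) * f_cone t"
      using \<open>-\<alpha> < -a\<close> crossing_bounds f_cone_pos[of t] by (simp add: t_def)
    ultimately show False by linarith
  qed
  have "f_cone t = f t" if "t \<in> {-a..0}" "t \<noteq> crossing" for t
    using inner integral_eq_0_iff[OF cont_inner] left_gap_nonneg(2) a that by fastforce
  then show "f t = f_cone t" if "t \<in> {-a..0}" for t
    using continuous_on_eq_off_point[OF _ continuous_on_f_cone continuous_on_f, of "-a" 0 crossing t]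
      that a b by auto
qed

lemma right_gap_integrals_nonneg:
  "0 \<le> integral {0..\<beta>} (\<lambda>t. (\<beta> - t) * (f_cone t - f t))"
  "0 \<le> integral {\<beta>..b} (\<lambda>t. (t - \<beta>) * f t)"
  using a \<beta>_pos \<beta>_le_b
  by (intro integral_nonneg right_gap_nonneg integrable_continuous_interval continuous_intros
      continuous_on_f_cone continuous_on_f; auto)+

lemma cone_moment_right_le: "integral {0..\<beta>} (\<lambda>t. t * f_cone t) \<le> integral {0..b} (\<lambda>t. t * f t)"
  using moment_gap_right right_gap_integrals_nonneg by linarith

lemma cone_moment_right_eq:
  assumes "integral {0..\<beta>} (\<lambda>t. t * f_cone t) = integral {0..b} (\<lambda>t. t * f t)"
  shows "\<beta> = b" "\<And>t. t \<in> {0..b} \<Longrightarrow> f t = f_cone t"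
proof -
  have cont_inner: "continuous_on {0..\<beta>} (\<lambda>t. (\<beta> - t) * (f_cone t - f t))"
    using a \<beta>_le_b by (intro continuous_intros continuous_on_f_cone continuous_on_f) auto
  have cont_outer: "continuous_on {\<beta>..b} (\<lambda>t. (t - \<beta>) * f t)"
    using a \<beta>_pos by (intro continuous_intros continuous_on_f) auto
  have inner: "integral {0..\<beta>} (\<lambda>t. (\<beta> - t) * (f_cone t - f t)) = 0"
    and outer: "integral {\<beta>..b} (\<lambda>t. (t - \<beta>) * f t) = 0"
    using moment_gap_right right_gap_integrals_nonneg assms by linarith+
  show "\<beta> = b"
  proof (rule ccontr)
    assume "\<beta> \<noteq> b"
    then have "\<beta> < b" using \<beta>_le_b by simp
    define t where "t = (\<beta> + b) / 2"
    have "t \<in> {\<beta>..b}"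
      using \<open>\<beta> < b\<close> by (simp add: t_def)
    then have "(t - \<beta>) * f t = 0"
      using integral_eq_0_iff[OF cont_outer \<open>\<beta> < b\<close> right_gap_nonneg(2)] outer by blast
    moreover have "0 < (t - \<beta>) * f t"
      using \<open>\<beta> < b\<close> \<beta>_pos a pos[of t] by (simp add: t_def)
    ultimately show False by linarith
  qed
  have "f_cone t = f t" if "t \<in> {0..b}" "t \<noteq> \<beta>" for t
    using inner integral_eq_0_iff[OF cont_inner] right_gap_nonneg(1) \<beta>_pos \<open>\<beta> = b\<close> that by fastforce
  then show "f t = f_cone t" if "t \<in> {0..b}" for t
    using continuous_on_eq_off_point[OF _ continuous_on_f_cone continuous_on_f, of 0 b \<beta> t]
      that a b by auto
qed

lemma cone_moment_split:
  "integral {-\<alpha>..\<beta>} (\<lambda>t. t * f_cone t) =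
     integral {-\<alpha>..0} (\<lambda>t. t * f_cone t) + integral {0..\<beta>} (\<lambda>t. t * f_cone t)"
  using Henstock_Kurzweil_Integration.integral_combine[OF _ _ f_cone_moment_integrable, of "-\<alpha>" 0 \<beta>]
    \<alpha>_pos \<beta>_pos by simp

lemma f_moment_split: "integral {-a..0} (\<lambda>t. t * f t) + integral {0..b} (\<lambda>t. t * f t) = 0"
  using Henstock_Kurzweil_Integration.integral_combine[OF _ _ f_moment_integrable, of "-a" 0 b] a b bary
  by simp

lemma cone_moment_nonpos: "integral {-\<alpha>..\<beta>} (\<lambda>t. t * f_cone t) \<le> 0"
  using cone_moment_split f_moment_split cone_moment_left_le cone_moment_right_le by linarith

lemma cone_moment_eq_0_iff:
  "integral {-\<alpha>..\<beta>} (\<lambda>t. t * f_cone t) = 0 \<longleftrightarrow> \<alpha> = a \<and> \<beta> = b \<and> (\<forall>t\<in>{-a..b}. f t = f_cone t)"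
proof
  assume "integral {-\<alpha>..\<beta>} (\<lambda>t. t * f_cone t) = 0"
  then have "integral {-\<alpha>..0} (\<lambda>t. t * f_cone t) = integral {-a..0} (\<lambda>t. t * f t)"
    "integral {0..\<beta>} (\<lambda>t. t * f_cone t) = integral {0..b} (\<lambda>t. t * f t)"
    using cone_moment_split f_moment_split cone_moment_left_le cone_moment_right_le by linarith+
  then show "\<alpha> = a \<and> \<beta> = b \<and> (\<forall>t\<in>{-a..b}. f t = f_cone t)"
    using cone_moment_left_eq cone_moment_right_eq by (metis atLeastAtMost_iff linear)
next
  assume "\<alpha> = a \<and> \<beta> = b \<and> (\<forall>t\<in>{-a..b}. f t = f_cone t)"
  then show "integral {-\<alpha>..\<beta>} (\<lambda>t. t * f_cone t) = 0"
    using integral_cong[of "{-a..b}" "\<lambda>t. t * f_cone t" "\<lambda>t. t * f t"] bary by simp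
qed

lemma height_ratio_minus_bound:
  "(\<beta> + \<alpha>) / \<alpha> - (1 + 1 / n) =
     (n + 1) / (\<alpha> * \<kappa> ^ (n - 1) * (\<beta> + \<alpha>) ^ n) * integral {-\<alpha>..\<beta>} (\<lambda>t. t * f_cone t)"
proof -
  define P where "P = \<kappa> ^ (n - 1) * (\<beta> + \<alpha>) ^ n"
  have "0 < P"
    using \<alpha>_pos \<beta>_pos \<kappa>_pos by (simp add: P_def)
  have "(\<beta> + \<alpha>) / \<alpha> - (1 + 1 / n) = (n + 1) / \<alpha> * ((\<beta> + \<alpha>) / (n + 1) - \<alpha> / n)"
    using \<alpha>_pos n_pos by (simp add: field_split_simps) (smt (verit) mult_pos_pos of_nat_0_less_iff)
  also have "\<dots> = (n + 1) / (\<alpha> * P) * (P * ((\<beta> + \<alpha>) / (n + 1) - \<alpha> / n))"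
    using \<open>0 < P\<close> by simp
  finally show ?thesis
    by (simp add: integral_unique[OF f_cone_moment_has_integral_total] P_def mult.assoc)
qed

lemma height_ratio_factor_pos: "0 < (n + 1) / (\<alpha> * \<kappa> ^ (n - 1) * (\<beta> + \<alpha>) ^ n)"
  using \<alpha>_pos \<beta>_pos \<kappa>_pos by simp

lemma height_ratio_le: "(\<beta> + \<alpha>) / \<alpha> \<le> 1 + 1 / n"
  using height_ratio_minus_bound
    mult_nonneg_nonpos[OF less_imp_le[OF height_ratio_factor_pos] cone_moment_nonpos]
  by linarith

lemma height_ratio_eq_iff:
  "(\<beta> + \<alpha>) / \<alpha> = 1 + 1 / n \<longleftrightarrow> integral {-\<alpha>..\<beta>} (\<lambda>t. t * f_cone t) = 0"
proof -
  have "(n + 1) / (\<alpha> * \<kappa> ^ (n - 1) * (\<beta> + \<alpha>) ^ n) \<noteq> 0"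
    using height_ratio_factor_pos by linarith
  then show ?thesis
    using height_ratio_minus_bound
    by (simp only: eq_iff_diff_eq_0[of "(\<beta> + \<alpha>) / \<alpha>"] mult_eq_0_iff simp_thms)
qed

lemma W_div_V_le: "W / V \<le> (1 + 1 / n) ^ n - 1"
  unfolding W_div_V using height_ratio_le \<alpha>_pos \<beta>_pos by (simp add: power_mono)

lemma W_div_V_eq_iff: "W / V = (1 + 1 / n) ^ n - 1 \<longleftrightarrow> (\<beta> + \<alpha>) / \<alpha> = 1 + 1 / n"
  unfolding W_div_V using power_eq_iff_eq_base[of n "(\<beta> + \<alpha>) / \<alpha>" "1 + 1 / n"] \<alpha>_pos \<beta>_pos n_pos
  by simp

lemma h_eq_h_cone_if_f_eq_f_cone:
  assumes "\<alpha> = a" "t \<in> {-a..b}" "f t = f_cone t"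
  shows "h t = h_cone t"
  using h_eq_if_f_eq_power[of t "h_cone t"] assms h_cone_nonneg[of t] by (simp add: f_cone_def)

lemma affine_h_is_cone:
  assumes affine: "\<forall>t\<in>{-a..b}. h t = C * t + D" and "h (-a) = 0"
  shows "\<alpha> = a" "\<And>t. t \<in> {-a..b} \<Longrightarrow> f t = f_cone t"
proof -
  have h_eq: "h t = C * (t + a)" if "t \<in> {-a..b}" for t
    using affine \<open>h (-a) = 0\<close> a b that by (auto simp: algebra_simps)
  have "h 0 = C * a"
    using h_eq[of 0] a b by simp
  then have "0 < C"
    using h0_pos a by (simp add: zero_less_mult_iff)
  have f_eq: "f t = C ^ (n - 1) * (t + a) ^ (n - 1)" if "t \<in> {-a..b}" for t
    using f_eq_h_power[OF that] h_eq[OF that] by (simp add: power_mult_distrib)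
  have "((\<lambda>t. C ^ (n - 1) * (t + a) ^ (n - 1)) has_integral C ^ (n - 1) * (a ^ n / n)) {-a..0}"
    using has_integral_mult_right[OF has_integral_shifted_power[of "-a" 0 a "n - 1"]] a n_pos
    by (simp add: power_0_left)
  then have "V = C ^ (n - 1) * (a ^ n / n)"
    unfolding V_def using f_eq b by (intro integral_unique) (auto intro: has_integral_eq)
  then show "\<alpha> = a"
    using \<open>h 0 = C * a\<close> \<open>0 < C\<close> a n_pos
    by (simp add: \<alpha>_def power_mult_distrib power_n_eq[of a])
  then have "\<kappa> = C"
    using \<open>h 0 = C * a\<close> a by (simp add: \<kappa>_def)
  then show "f t = f_cone t" if "t \<in> {-a..b}" for t
    using f_eq[OF that] \<open>\<alpha> = a\<close> by (simp add: f_cone_def h_cone_def power_mult_distrib)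
qed

lemma \<beta>_eq_b_if_f_eq_f_cone:
  assumes "\<And>t. t \<in> {0..b} \<Longrightarrow> f t = f_cone t"
  shows "\<beta> = b"
proof -
  have "W = \<kappa> ^ (n - 1) * (((b + \<alpha>) ^ n - (0 + \<alpha>) ^ n) / n)"
    unfolding W_def using assms b
    by (intro integral_unique has_integral_eq[OF _ f_cone_has_integral]) auto
  moreover have "W = \<kappa> ^ (n - 1) * (((\<beta> + \<alpha>) ^ n - (0 + \<alpha>) ^ n) / n)"
    using integral_unique[OF f_cone_has_integral_W] integral_unique[OF f_cone_has_integral] \<beta>_pos
    by simp
  ultimately have "(b + \<alpha>) ^ n = (\<beta> + \<alpha>) ^ n"
    using \<kappa>_pos n_pos by simp
  then show ?thesis
    using power_eq_imp_eq_base[of "b + \<alpha>" n "\<beta> + \<alpha>"] \<alpha>_pos \<beta>_pos b n_pos by simp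
qed

lemma cone_moment_eq_0_iff_affine:
  "integral {-\<alpha>..\<beta>} (\<lambda>t. t * f_cone t) = 0 \<longleftrightarrow>
     (\<exists>C D. \<forall>t\<in>{-a..b}. h t = C * t + D) \<and> h (-a) = 0"
proof
  assume "integral {-\<alpha>..\<beta>} (\<lambda>t. t * f_cone t) = 0"
  then have "\<alpha> = a" and h_cone: "\<forall>t\<in>{-a..b}. h t = h_cone t"
    using cone_moment_eq_0_iff h_eq_h_cone_if_f_eq_f_cone by auto
  then have "\<forall>t\<in>{-a..b}. h t = \<kappa> * t + \<kappa> * a" "h (-a) = 0"
    using a b by (simp_all add: h_cone_def algebra_simps)
  then show "(\<exists>C D. \<forall>t\<in>{-a..b}. h t = C * t + D) \<and> h (-a) = 0"
    by blast
next
  assume "(\<exists>C D. \<forall>t\<in>{-a..b}. h t = C * t + D) \<and> h (-a) = 0"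
  then obtain C D where "\<forall>t\<in>{-a..b}. h t = C * t + D" "h (-a) = 0"
    by blast
  then have "\<alpha> = a" and f_cone: "\<And>t. t \<in> {-a..b} \<Longrightarrow> f t = f_cone t"
    using affine_h_is_cone by blast+
  moreover have "\<beta> = b"
    using f_cone a by (intro \<beta>_eq_b_if_f_eq_f_cone) auto
  ultimately show "integral {-\<alpha>..\<beta>} (\<lambda>t. t * f_cone t) = 0"
    using cone_moment_eq_0_iff by blast
qed

end

theorem claim4:
  fixes n :: nat and a b :: real and f :: "real \<Rightarrow> real"
  assumes n: "n \<ge> 2"
    and a: "a > 0" and b: "b > 0"
    and cont: "continuous_on {-a..b} f"
    and nonneg: "\<And>t. t \<in> {-a..b} \<Longrightarrow> f t \<ge> 0"
    and pos: "\<And>t. t \<in> {-a<..<b} \<Longrightarrow> f t > 0"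
    and conc: "concave_on {-a..b} (\<lambda>t. f t powr (1 / (real n - 1)))"
    and bary: "integral {-a..b} (\<lambda>t. t * f t) = 0"
  shows "integral {0..b} f / integral {-a..0} f \<le> (1 + 1 / real n) ^ n - 1 \<and>
         (integral {0..b} f / integral {-a..0} f = (1 + 1 / real n) ^ n - 1 \<longleftrightarrow>
         ((\<exists>c d. \<forall>t\<in>{-a..b}. f t powr (1 / (real n - 1)) = c * t + d)
          \<and> f (-a) powr (1 / (real n - 1)) = 0))"
proof -
  interpret grunbaum_profile n a b f
    using assms by unfold_locales
  show ?thesis
    using W_div_V_le W_div_V_eq_iff height_ratio_eq_iff cone_moment_eq_0_iff_affine
    unfolding W_def V_def h_def by simp
qed

end
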